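(* Let $K$ be any field, let $u(x,y)\in K[x,y]\setminus K$, and let $\rho=(\alpha x+p(y),\beta y+\gamma)$ be a nonaffine triangular automorphism of $K[x,y]$, where $\alpha,\beta\in K\setminus\{0\}$, $\gamma\in K$ and $p(y)\in K[y]$ has degree at least $2$. Let $\tau=(y,x)$, so that $\tau\rho u=u(\alpha y+p(x),\beta x+\gamma)$. Then each of the following statements implies the next: (i) $u$ is biased; (ii) $\deg u<\deg(\tau\rho u)$; (iii) $\deg u\le\deg(\tau\rho u)$; (iv) $\tau\rho u$ is biased.
   Context: An automorphism $\varphi=(f,g)$ of $K[x,y]$ means $\varphi x=f$, $\varphi y=g$, and $\varphi u=u(f,g)$; composition is $(c,d)(a,b)=(a(c,d),b(c,d))$. $\deg$ denotes total degree. For $0\ne u\in K[x,y]$, $|u|$ denotes the homogeneous component of $u$ of maximal total degree, and $u$ is called biased if $\deg_x|u|\ge\deg_y|u|$, where $\deg_x,\deg_y$ are the degrees in $x$ and in $y$. *)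

theory Defs
  imports "HOL-Computational_Algebra.Polynomial"
begin

text \<open>K[x,y] is represented as ('a poly) poly: polynomials in y whose coefficients
are polynomials in x. The coefficient of x^i y^j in u is coeff (coeff u j) i.\<close>

definition varX :: "'a::comm_ring_1 poly poly" where
  "varX = [:[:0, 1:]:]"

definition varY :: "'a::comm_ring_1 poly poly" where
  "varY = [:0, 1:]"

definition const2 :: "'a::comm_ring_1 \<Rightarrow> 'a poly poly" where
  "const2 c = [:[:c:]:]"

definition eval2 :: "'a::comm_ring_1 poly poly \<Rightarrow> 'a poly poly \<Rightarrow> 'a poly poly \<Rightarrow> 'a poly poly" where
  "eval2 u f g = poly (map_poly (\<lambda>c. poly (map_poly const2 c) f) u) g"

definition aut_apply :: "('a::comm_ring_1 poly poly \<times> 'a poly poly) \<Rightarrow> 'a poly poly \<Rightarrow> 'a poly poly" where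
  "aut_apply \<phi> u = eval2 u (fst \<phi>) (snd \<phi>)"

text \<open>Composition (c,d)(a,b) = (a(c,d), b(c,d)).\<close>
definition aut_comp :: "('a::comm_ring_1 poly poly \<times> 'a poly poly) \<Rightarrow> ('a poly poly \<times> 'a poly poly) \<Rightarrow> ('a poly poly \<times> 'a poly poly)" where
  "aut_comp \<psi> \<phi> = (eval2 (fst \<phi>) (fst \<psi>) (snd \<psi>), eval2 (snd \<phi>) (fst \<psi>) (snd \<psi>))"

definition supp2 :: "'a::zero poly poly \<Rightarrow> (nat \<times> nat) set" where
  "supp2 u = {(i, j). coeff (coeff u j) i \<noteq> 0}"

text \<open>Total degree (for u \<noteq> 0).\<close>
definition tdeg :: "'a::zero poly poly \<Rightarrow> nat" where
  "tdeg u = Max ((\<lambda>(i, j). i + j) ` supp2 u)"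

definition degx_top :: "'a::zero poly poly \<Rightarrow> nat" where
  "degx_top u = Max {i. \<exists>j. (i, j) \<in> supp2 u \<and> i + j = tdeg u}"

definition degy_top :: "'a::zero poly poly \<Rightarrow> nat" where
  "degy_top u = Max {j. \<exists>i. (i, j) \<in> supp2 u \<and> i + j = tdeg u}"

definition biased :: "'a::zero poly poly \<Rightarrow> bool" where
  "biased u \<longleftrightarrow> degx_top u \<ge> degy_top u"

end

theory Submission
  imports Defs
begin

text \<open>\<open>\<tau>\<rho>u = G(x, y) = F(x, \<alpha>y + p(x))\<close> with \<open>F(x, y) = u(y, \<beta>x + \<gamma>)\<close>,
  and \<open>F\<close> has the total degree of \<open>u\<close> and the transposed top monomials. With \<open>d = deg p \<ge> 2\<close>,
  weight \<open>x\<close> by \<open>1\<close> and \<open>y\<close> by \<open>d\<close>: \<open>F\<close> and \<open>G\<close> have the same weighted degree \<open>H\<close>, and their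
  weighted leading forms are \<open>x\<^sup>H \<Lambda>(y/x\<^sup>d)\<close> and \<open>x\<^sup>H \<Lambda>(c + \<alpha> y/x\<^sup>d)\<close>, \<open>c\<close> the leading coefficient of \<open>p\<close>. If \<open>F\<close> has a top
  monomial \<open>x\<^sup>i y\<^sup>a\<close> with \<open>i \<le> a\<close>, \<open>a > 0\<close>, then \<open>H \<ge> d a + i\<close> forces every term of \<open>\<Lambda>\<close> to have
  degree at least \<open>a\<close>, and a low-degree term of \<open>\<Lambda>(c + \<alpha> t)\<close> gives a monomial of \<open>G\<close> of total
  degree exceeding \<open>deg F\<close>. This is (i) \<open>\<Longrightarrow>\<close> (ii); applied to the inverse map
  \<open>y \<mapsto> (y - p(x))/\<alpha>\<close> it gives (iii) \<open>\<Longrightarrow>\<close> (iv).\<close>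

locale semiring_hom =
  fixes h :: "'a::comm_semiring_1 \<Rightarrow> 'b::comm_semiring_1"
  assumes hom_add: "h (x + y) = h x + h y"
    and hom_mult: "h (x * y) = h x * h y"
    and hom_zero: "h 0 = 0"
begin

lemma map_poly_add: "map_poly h (p + q) = map_poly h p + map_poly h q"
  by (intro poly_eqI) (simp add: coeff_map_poly hom_add hom_zero)

lemma map_poly_mult: "map_poly h (p * q) = map_poly h p * map_poly h q"
proof (induction p)
  case (pCons a p)
  then show ?case
    by (simp add: map_poly_add map_poly_smult map_poly_pCons hom_mult hom_zero)
qed simp

lemma hom_poly: "h (poly p z) = poly (map_poly h p) (h z)"
  by (induction p) (simp_all add: map_poly_pCons hom_add hom_mult hom_zero)

lemma semiring_hom_poly_map_poly: "semiring_hom (\<lambda>p. poly (map_poly h p) z)"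
  by unfold_locales (simp_all add: map_poly_add map_poly_mult)

end

lemma semiring_hom_const2: "semiring_hom const2"
  by unfold_locales (simp_all add: const2_def)

lemma semiring_hom_eval2: "semiring_hom (\<lambda>u. eval2 u f g)"
proof -
  interpret const2_hom: semiring_hom const2 by (rule semiring_hom_const2)
  interpret ev: semiring_hom "\<lambda>c. poly (map_poly const2 c) f"
    by (rule const2_hom.semiring_hom_poly_map_poly)
  show ?thesis
    unfolding eval2_def by (rule ev.semiring_hom_poly_map_poly)
qed

lemma eval2_0 [simp]: "eval2 0 f g = 0"
  by (simp add: eval2_def)

lemma const2_0 [simp]: "const2 0 = 0"
  by (simp add: const2_def)

lemma eval2_add: "eval2 (u + w) f g = eval2 u f g + eval2 w f g"
  using semiring_hom.hom_add[OF semiring_hom_eval2] .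

lemma eval2_mult: "eval2 (u * w) f g = eval2 u f g * eval2 w f g"
  using semiring_hom.hom_mult[OF semiring_hom_eval2] .

lemma eval2_const2 [simp]: "eval2 (const2 a) f g = const2 a"
  by (simp add: eval2_def const2_def map_poly_pCons)

lemma eval2_varX [simp]: "eval2 varX f g = f"
  by (simp add: eval2_def varX_def const2_def map_poly_pCons pCons_one)

lemma eval2_varY [simp]: "eval2 varY f g = g"
  by (simp add: eval2_def varY_def const2_def map_poly_pCons pCons_one)

lemma eval2_poly_in_x [simp]: "eval2 [:c:] f g = poly (map_poly const2 c) f"
  by (simp add: eval2_def map_poly_pCons)

lemma eval2_poly_in_y: "eval2 (map_poly (\<lambda>a. [:a:]) c) f g = poly (map_poly const2 c) g"
  unfolding eval2_def
  by (subst map_poly_map_poly) (simp_all add: o_def const2_def[abs_def] map_poly_pCons)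

lemma eval2_eval2: "eval2 (eval2 u f g) f' g' = eval2 u (eval2 f f' g') (eval2 g f' g')"
proof -
  interpret ev: semiring_hom "\<lambda>w. eval2 w f' g'" by (rule semiring_hom_eval2)
  have "eval2 (poly (map_poly const2 c) f) f' g' = poly (map_poly const2 c) (eval2 f f' g')" for c
    by (simp add: ev.hom_poly map_poly_map_poly o_def const2_def[symmetric])
  then have "map_poly (\<lambda>w. eval2 w f' g') (map_poly (\<lambda>c. poly (map_poly const2 c) f) u)
      = map_poly (\<lambda>c. poly (map_poly const2 c) (eval2 f f' g')) u"
    by (simp add: map_poly_map_poly o_def)
  then show ?thesis
    by (simp add: eval2_def[of u] eval2_def[of "poly _ g"] ev.hom_poly)
qed

lemma poly_map_const2_varX: "poly (map_poly const2 c) varX = [:c:]"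
  by (induction c) (simp_all add: map_poly_pCons varX_def const2_def)

lemma poly_map_const2_varY: "poly (map_poly const2 c) varY = map_poly (\<lambda>a. [:a:]) c"
  by (induction c) (simp_all add: map_poly_pCons varY_def const2_def)

lemma pcompose_eq_eval2: "pcompose F f = eval2 F varX f"
  by (simp add: pcompose_altdef eval2_def poly_map_const2_varX)

lemma eval2_varY_poly: "eval2 w varY q = poly (map_poly (map_poly (\<lambda>a. [:a:])) w) q"
  by (simp add: eval2_def poly_map_const2_varY)

lemma eval2_poly_in_x_varY: "eval2 w [:q:] varY = map_poly (\<lambda>c. pcompose c q) w"
proof -
  have "poly (map_poly const2 c) [:q:] = [:pcompose c q:]" for c
    by (induction c) (simp_all add: map_poly_pCons const2_def pcompose_pCons)
  then have "eval2 w [:q:] varY = pcompose (map_poly (\<lambda>c. pcompose c q) w) [:0, 1:]"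
    by (simp add: eval2_def pcompose_altdef map_poly_map_poly o_def varY_def)
  then show ?thesis by simp
qed

lemma finite_supp2: "finite (supp2 w)"
proof (rule finite_subset)
  show "supp2 w \<subseteq> (\<Union>j\<le>degree w. {..degree (coeff w j)} \<times> {j})"
  proof
    fix x assume "x \<in> supp2 w"
    then obtain i j where x: "x = (i, j)" and ij: "coeff (coeff w j) i \<noteq> 0"
      by (auto simp: supp2_def)
    then have "coeff w j \<noteq> 0" by auto
    with ij show "x \<in> (\<Union>j\<le>degree w. {..degree (coeff w j)} \<times> {j})"
      unfolding x by (auto intro: le_degree)
  qed
qed simp

lemma coeff_le_tdeg: "coeff (coeff w j) i \<noteq> 0 \<Longrightarrow> i + j \<le> tdeg w"
  unfolding tdeg_def by (rule Max_ge) (use finite_supp2[of w] in \<open>auto simp: supp2_def\<close>)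

lemma degree_coeff_le_tdeg: "coeff w j \<noteq> 0 \<Longrightarrow> degree (coeff w j) + j \<le> tdeg w"
  by (rule coeff_le_tdeg) simp

definition top_monomial :: "'a::zero poly poly \<Rightarrow> nat \<Rightarrow> nat \<Rightarrow> bool" where
  "top_monomial w i j \<longleftrightarrow> coeff (coeff w j) i \<noteq> 0 \<and> i + j = tdeg w"

lemma top_monomial_exists:
  assumes "w \<noteq> 0"
  shows "\<exists>i j. top_monomial w i j"
proof -
  obtain j where "coeff w j \<noteq> 0" using assms by (meson leading_coeff_0_iff)
  then have "supp2 w \<noteq> {}" by (auto simp: supp2_def dest: leading_coeff_neq_0)
  then have "tdeg w \<in> (\<lambda>(i, j). i + j) ` supp2 w"
    unfolding tdeg_def by (intro Max_in) (simp_all add: finite_supp2)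
  then show ?thesis by (force simp: top_monomial_def supp2_def)
qed

lemma top_monomial_iff_row:
  "top_monomial w i j \<longleftrightarrow> coeff w j \<noteq> 0 \<and> degree (coeff w j) = i \<and> i + j = tdeg w"
proof
  assume top: "top_monomial w i j"
  then have "coeff w j \<noteq> 0" and "i \<le> degree (coeff w j)"
    by (auto simp: top_monomial_def intro: le_degree)
  with top show "coeff w j \<noteq> 0 \<and> degree (coeff w j) = i \<and> i + j = tdeg w"
    using degree_coeff_le_tdeg[of w j] by (auto simp: top_monomial_def)
qed (auto simp: top_monomial_def)

lemma tdeg_eq_0_imp_const2:
  fixes w :: "'a::comm_ring_1 poly poly"
  assumes "tdeg w = 0"
  shows "w = const2 (coeff (coeff w 0) 0)"
proof (rule poly_eqI)
  fix j
  show "coeff w j = coeff (const2 (coeff (coeff w 0) 0)) j"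
  proof (rule poly_eqI)
    fix i
    have "coeff (coeff w j) i = 0" if "i + j \<noteq> 0"
      using coeff_le_tdeg[of w j i] assms that by linarith
    then show "coeff (coeff w j) i = coeff (coeff (const2 (coeff (coeff w 0) 0)) j) i"
      by (cases i; cases j) (simp_all add: const2_def)
  qed
qed

lemma top_monomial_degx_top:
  assumes "w \<noteq> 0"
  shows "\<exists>j. top_monomial w (degx_top w) j"
proof -
  let ?S = "{i. \<exists>j. (i, j) \<in> supp2 w \<and> i + j = tdeg w}"
  have "finite ?S" by (rule finite_subset[of _ "{..tdeg w}"]) auto
  moreover have "?S \<noteq> {}"
    using top_monomial_exists[OF assms] by (auto simp: top_monomial_def supp2_def)
  ultimately have "degx_top w \<in> ?S" unfolding degx_top_def by (rule Max_in)
  then show ?thesis by (auto simp: top_monomial_def supp2_def)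
qed

lemma top_monomial_degy_top:
  assumes "w \<noteq> 0"
  shows "\<exists>i. top_monomial w i (degy_top w)"
proof -
  let ?S = "{j. \<exists>i. (i, j) \<in> supp2 w \<and> i + j = tdeg w}"
  have "finite ?S" by (rule finite_subset[of _ "{..tdeg w}"]) auto
  moreover have "?S \<noteq> {}"
    using top_monomial_exists[OF assms] by (auto simp: top_monomial_def supp2_def)
  ultimately have "degy_top w \<in> ?S" unfolding degy_top_def by (rule Max_in)
  then show ?thesis by (auto simp: top_monomial_def supp2_def)
qed

lemma top_monomial_le_degx_top: "top_monomial w i j \<Longrightarrow> i \<le> degx_top w"
  unfolding degx_top_def
  by (rule Max_ge, rule finite_subset[of _ "{..tdeg w}"]) (auto simp: top_monomial_def supp2_def)

lemma top_monomial_le_degy_top: "top_monomial w i j \<Longrightarrow> j \<le> degy_top w"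
  unfolding degy_top_def
  by (rule Max_ge, rule finite_subset[of _ "{..tdeg w}"]) (auto simp: top_monomial_def supp2_def)

lemma biased_imp_top_monomial:
  assumes "w \<noteq> 0" and "biased w"
  shows "\<exists>i j. top_monomial w i j \<and> j \<le> i"
  using top_monomial_degx_top[OF assms(1)] top_monomial_le_degy_top assms(2)
  unfolding biased_def by (meson order.trans)

lemma not_biased_imp_top_monomial:
  assumes "w \<noteq> 0" and "\<not> biased w"
  shows "\<exists>i j. top_monomial w i j \<and> i < j"
  using top_monomial_degy_top[OF assms(1)] top_monomial_le_degx_top assms(2)
  unfolding biased_def by (meson le_less_trans not_le)

lemma
  fixes h :: "'a::zero poly \<Rightarrow> 'b::zero poly"
  assumes "\<And>c. h c = 0 \<longleftrightarrow> c = 0" and "\<And>c. degree (h c) = degree c"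
  shows tdeg_map_poly_rows: "tdeg (map_poly h w) = tdeg w"
    and top_monomial_map_poly_rows: "top_monomial (map_poly h w) i j \<longleftrightarrow> top_monomial w i j"
proof -
  have row: "coeff (map_poly h w) j = h (coeff w j)" for j
    using assms(1) by (simp add: coeff_map_poly)
  have le: "tdeg w' \<le> tdeg w''"
    if nz: "w' \<noteq> 0"
      and rows: "\<And>j. coeff w' j \<noteq> 0 \<Longrightarrow>
        coeff w'' j \<noteq> 0 \<and> degree (coeff w'' j) = degree (coeff w' j)"
    for w' :: "'c::zero poly poly" and w'' :: "'d::zero poly poly"
  proof -
    obtain i j where "top_monomial w' i j" using top_monomial_exists[OF nz] by blast
    then have "coeff w' j \<noteq> 0" "degree (coeff w' j) + j = tdeg w'"
      by (auto simp: top_monomial_iff_row)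
    then show ?thesis using rows degree_coeff_le_tdeg[of w'' j] by force
  qed
  show tdeg: "tdeg (map_poly h w) = tdeg w"
  proof (cases "w = 0")
    case False
    then have "map_poly h w \<noteq> 0" using assms(1) by (simp add: map_poly_eq_0_iff)
    with False show ?thesis
      using le[of w "map_poly h w"] le[of "map_poly h w" w] by (simp add: row assms antisym)
  qed (simp add: tdeg_def supp2_def)
  show "top_monomial (map_poly h w) i j \<longleftrightarrow> top_monomial w i j"
    by (simp add: top_monomial_iff_row row tdeg assms)
qed

lemma coeff_poly_const: "coeff (poly P [:z:]) i = poly (map_poly (\<lambda>c. coeff c i) P) z"
  by (induction P) (simp_all add: map_poly_pCons)

lemma coeff_coeff_eval2_swap: "coeff (coeff (eval2 u varY varX) i) j = coeff (coeff u j) i"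
proof -
  have "coeff (eval2 u varY varX) i
      = poly (map_poly (\<lambda>c. coeff c i) (map_poly (map_poly (\<lambda>a. [:a:])) u)) [:0, 1:]"
    unfolding eval2_varY_poly varX_def by (rule coeff_poly_const)
  also have "map_poly (\<lambda>c. coeff c i) (map_poly (map_poly (\<lambda>a. [:a:])) u)
      = map_poly (\<lambda>a. [:a:]) (map_poly (\<lambda>c. coeff c i) u)"
    by (simp add: map_poly_map_poly o_def coeff_map_poly)
  also have "poly \<dots> [:0, 1:] = map_poly (\<lambda>c. coeff c i) u"
    by (metis pcompose_altdef pcompose_idR)
  finally show ?thesis by (simp add: coeff_map_poly)
qed

lemma supp2_eval2_swap: "supp2 (eval2 u varY varX) = prod.swap ` supp2 u"
  by (auto simp: supp2_def coeff_coeff_eval2_swap image_iff)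

lemma tdeg_eval2_swap: "tdeg (eval2 u varY varX) = tdeg u"
  unfolding tdeg_def supp2_eval2_swap image_image by (simp add: add.commute case_prod_beta)

lemma top_monomial_eval2_swap: "top_monomial (eval2 u varY varX) j i \<longleftrightarrow> top_monomial u i j"
  by (simp add: top_monomial_def coeff_coeff_eval2_swap tdeg_eval2_swap add.commute)

text \<open>\<open>F(y, x y\<^sup>d)\<close> has \<open>y\<close>-degree the \<open>(1, d)\<close>-weighted degree of \<open>F\<close>, while its \<open>x\<close>-exponents
  record the \<open>y\<close>-exponents of \<open>F\<close>; its leading coefficient \<open>wlead d F\<close> is the weighted leading
  form of \<open>F\<close> written as a polynomial in \<open>t = y/x\<^sup>d\<close>.\<close>

definition wdeg :: "nat \<Rightarrow> 'a::comm_ring_1 poly poly \<Rightarrow> nat" where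
  "wdeg d F = degree (eval2 F varY (varX * varY ^ d))"

definition wlead :: "nat \<Rightarrow> 'a::comm_ring_1 poly poly \<Rightarrow> 'a poly" where
  "wlead d F = coeff (eval2 F varY (varX * varY ^ d)) (wdeg d F)"

lemma varX_mult_varY_power: "varX * varY ^ d = monom [:0, 1:] d"
  by (simp add: varX_def varY_def monom_altdef)

lemma coeff_coeff_eval2_weight:
  "coeff (coeff (eval2 F varY (varX * varY ^ d)) e) k =
     (if d * k \<le> e then coeff (coeff F k) (e - d * k) else 0)"
proof (induction F arbitrary: e k)
  case (pCons a F)
  have eval2_pCons: "eval2 (pCons a F) varY q = map_poly (\<lambda>a. [:a:]) a + q * eval2 F varY q" for q
    by (simp add: eval2_varY_poly map_poly_pCons)
  show ?case
    using pCons.IH unfolding eval2_pCons varX_mult_varY_power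
    by (cases k) (auto simp: coeff_monom_mult algebra_simps coeff_map_poly)
qed simp

lemma wdeg_ge: "coeff F i \<noteq> 0 \<Longrightarrow> d * i + degree (coeff F i) \<le> wdeg d F"
  unfolding wdeg_def
  by (rule le_degree) (auto simp: coeff_coeff_eval2_weight dest: arg_cong[of _ 0 "\<lambda>c. coeff c i"])

lemma coeff_wlead:
  "coeff (wlead d F) k = (if d * k \<le> wdeg d F then coeff (coeff F k) (wdeg d F - d * k) else 0)"
  by (simp add: wlead_def coeff_coeff_eval2_weight)

lemma wlead_ne_0:
  assumes "F \<noteq> 0"
  shows "wlead d F \<noteq> 0"
proof -
  obtain i where "coeff F i \<noteq> 0" using assms by (meson leading_coeff_0_iff)
  then have "coeff (coeff (eval2 F varY (varX * varY ^ d)) (d * i + degree (coeff F i))) i \<noteq> 0"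
    by (simp add: coeff_coeff_eval2_weight)
  then have "eval2 F varY (varX * varY ^ d) \<noteq> 0" by auto
  then show ?thesis by (simp add: wlead_def wdeg_def)
qed

lemma map_poly_const_poly_eq_0_iff [simp]: "map_poly (\<lambda>a. [:a:]) c = 0 \<longleftrightarrow> c = 0"
  by (simp add: map_poly_eq_0_iff)

lemma degree_map_poly_const_poly [simp]: "degree (map_poly (\<lambda>a. [:a:]) c) = degree c"
  by (rule degree_map_poly) simp

lemma coeff_eval2_varY_top:
  fixes F :: "'a::idom poly poly"
  assumes "q \<noteq> 0" and bound: "\<And>i. coeff F i \<noteq> 0 \<Longrightarrow> degree q * i + degree (coeff F i) \<le> E"
  shows "coeff (eval2 F varY q) E =
    (\<Sum>i\<le>degree F.
       smult (if degree q * i + degree (coeff F i) = E then lead_coeff (coeff F i) else 0)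
         (lead_coeff q ^ i))"
proof -
  let ?lift = "map_poly (\<lambda>a. [:a:])"
  have "eval2 F varY q = (\<Sum>i\<le>degree F. ?lift (coeff F i) * q ^ i)"
    by (simp add: eval2_varY_poly poly_altdef degree_map_poly coeff_map_poly)
  moreover have "coeff (?lift (coeff F i) * q ^ i) E =
      smult (if degree q * i + degree (coeff F i) = E then lead_coeff (coeff F i) else 0)
        (lead_coeff q ^ i)"
    for i
  proof (cases "coeff F i = 0")
    case False
    have degree_term: "degree (?lift (coeff F i) * q ^ i) = degree (coeff F i) + degree q * i"
      using False assms(1) by (simp add: degree_mult_eq degree_power_eq degree_map_poly)
    show ?thesis
    proof (cases "degree q * i + degree (coeff F i) = E")
      case True
      then have "coeff (?lift (coeff F i) * q ^ i) E = lead_coeff (?lift (coeff F i)) * lead_coeff (q ^ i)"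
        using degree_term by (metis add.commute coeff_mult_degree_sum lead_coeff_mult)
      with True show ?thesis by (simp add: lead_coeff_power degree_map_poly coeff_map_poly)
    next
      case False
      then have "degree (?lift (coeff F i) * q ^ i) < E"
        using bound[OF \<open>coeff F i \<noteq> 0\<close>] degree_term by simp
      with False show ?thesis by (simp add: coeff_eq_0)
    qed
  qed simp
  ultimately show ?thesis by (simp add: coeff_sum)
qed

lemma pcompose_power_left: "pcompose (p ^ n) q = pcompose p q ^ n"
  by (induction n) (simp_all add: pcompose_1 pcompose_mult)

lemma pcompose_sum_smult_power:
  "pcompose (\<Sum>i\<in>A. smult (a i) ([:0, 1:] ^ i)) C = (\<Sum>i\<in>A. smult (a i) (C ^ i))"
  by (simp add: pcompose_sum pcompose_smult pcompose_power_left pcompose_pCons)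

lemma coeff_wdeg_eval2_varY:
  fixes F :: "'a::idom poly poly"
  assumes "q \<noteq> 0"
  shows "coeff (eval2 F varY q) (wdeg (degree q) F) = pcompose (wlead (degree q) F) (lead_coeff q)"
proof -
  define d where "d = degree q"
  define a where "a i = (if d * i + degree (coeff F i) = wdeg d F then lead_coeff (coeff F i) else 0)"
    for i
  have q1: "varX * varY ^ d \<noteq> 0" "degree (varX * varY ^ d) = d"
      "lead_coeff (varX * varY ^ d) = [:0, 1:]"
    by (simp_all add: varX_mult_varY_power degree_monom_eq)
  have "wlead d F = (\<Sum>i\<le>degree F. smult (a i) ([:0, 1:] ^ i))"
    unfolding wlead_def a_def using coeff_eval2_varY_top[OF q1(1), of F "wdeg d F"]
    by (simp add: wdeg_ge varX_mult_varY_power degree_monom_eq)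
  moreover have "coeff (eval2 F varY q) (wdeg d F) = (\<Sum>i\<le>degree F. smult (a i) (lead_coeff q ^ i))"
    unfolding a_def d_def by (rule coeff_eval2_varY_top) (simp_all add: assms wdeg_ge)
  ultimately show ?thesis by (simp add: d_def pcompose_sum_smult_power)
qed

lemma coeff_order_0_ne_0:
  fixes p :: "'a::idom poly"
  assumes "p \<noteq> 0"
  shows "coeff p (order 0 p) \<noteq> 0"
proof -
  obtain q where p: "p = monom 1 (order 0 p) * q" and "\<not> [:0, 1:] dvd q"
    using order_decomp[OF assms, of 0] by (auto simp: monom_altdef)
  then have "coeff q 0 \<noteq> 0" by (simp add: dvd_iff_poly_eq_0 poly_0_coeff_0)
  moreover have "coeff p (order 0 p) = coeff q 0"
    by (subst p) (simp add: coeff_monom_mult)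
  ultimately show ?thesis by simp
qed

lemma pcompose_linear_coeff_ne_0:
  fixes L :: "'a::field poly"
  assumes "L \<noteq> 0" and "c \<noteq> 0" and "\<alpha> \<noteq> 0"
  shows "\<exists>k. coeff (pcompose L [:c, \<alpha>:]) k \<noteq> 0 \<and> k + order 0 L \<le> degree L"
proof -
  obtain R where L: "L = [:0, 1:] ^ order 0 L * R" and R0: "R \<noteq> 0"
    using order_decomp[OF assms(1), of 0] assms(1) by auto
  define R' where "R' = pcompose R [:c, \<alpha>:]"
  have R'0: "R' \<noteq> 0" and degree_R': "degree R' = degree R"
    using R0 assms(3) by (simp_all add: R'_def pcompose_eq_0_iff degree_pcompose)
  have L': "pcompose L [:c, \<alpha>:] = [:c, \<alpha>:] ^ order 0 L * R'"
    by (subst L) (simp add: R'_def pcompose_mult pcompose_power_left pcompose_pCons)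
  have "order 0 ([:c, \<alpha>:] ^ order 0 L) = 0"
    using assms(2) by (intro order_0I) simp
  then have "order 0 (pcompose L [:c, \<alpha>:]) = order 0 R'"
    using assms(2) R'0 by (simp add: L' order_mult)
  moreover have "order 0 R' \<le> degree R" using order_degree[OF R'0] degree_R' by simp
  moreover have "degree L = order 0 L + degree R"
    using R0 by (subst L) (simp add: degree_mult_eq degree_linear_power)
  moreover have "pcompose L [:c, \<alpha>:] \<noteq> 0"
    using assms(2) R'0 by (simp add: L')
  ultimately show ?thesis
    by (metis add.commute add_le_cancel_left coeff_order_0_ne_0)
qed

lemma eval2_triangular_weight:
  fixes p :: "'a::comm_ring_1 poly"
  assumes "\<alpha> \<noteq> 0"
  defines "q \<equiv> eval2 [:p, [:\<alpha>:]:] varY (varX * varY ^ degree p)"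
  shows "degree q = degree p" and "lead_coeff q = [:lead_coeff p, \<alpha>:]"
proof -
  have q: "q = map_poly (\<lambda>a. [:a:]) p + monom [:0, \<alpha>:] (degree p)"
    using assms(1)
    by (simp add: q_def eval2_def map_poly_pCons poly_map_const2_varY varX_mult_varY_power
        const2_def monom_altdef)
  have coeff_q: "coeff q (degree p) = [:lead_coeff p, \<alpha>:]"
    by (simp add: q coeff_map_poly)
  moreover have "degree q \<le> degree p"
    unfolding q by (intro degree_add_le) (simp_all add: degree_monom_le)
  moreover have "degree p \<le> degree q"
    using assms(1) coeff_q by (intro le_degree) simp
  ultimately show "degree q = degree p" and "lead_coeff q = [:lead_coeff p, \<alpha>:]"
    by simp_all
qed

text \<open>The weighted leading form \<open>\<Lambda>\<close> of \<open>F\<close> becomes \<open>\<Lambda>(c + \<alpha> t)\<close> for \<open>G = F(x, \<alpha>y + p(x))\<close>,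
  where \<open>c\<close> is the leading coefficient of \<open>p\<close>. The lowest term \<open>t\<^sup>m\<close> of \<open>\<Lambda>\<close> yields the monomial
  \<open>x\<^bsup>H - d m\<^esup> y\<^sup>m\<close> of \<open>F\<close>, and a term \<open>t\<^sup>k\<close> of \<open>\<Lambda>(c + \<alpha> t)\<close> with \<open>k + m \<le> deg \<Lambda>\<close>
  yields the monomial \<open>x\<^bsup>H - d k\<^esup> y\<^sup>k\<close> of \<open>G\<close>.\<close>

lemma wdeg_monomials_pcompose_triangular:
  fixes F :: "'a::field poly poly"
  assumes "p \<noteq> 0" and \<alpha>: "\<alpha> \<noteq> 0" and "F \<noteq> 0"
  defines "d \<equiv> degree p" and "H \<equiv> wdeg (degree p) F"
  obtains m k where "d * k + d * m \<le> H" and "H - d * m + m \<le> tdeg F"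
    and "H - d * k + k \<le> tdeg (pcompose F [:p, [:\<alpha>:]:])"
proof -
  define G where "G = pcompose F [:p, [:\<alpha>:]:]"
  define \<Lambda> where "\<Lambda> = wlead d F"
  define m where "m = order 0 \<Lambda>"
  define q where "q = eval2 [:p, [:\<alpha>:]:] varY (varX * varY ^ d)"
  have \<Lambda>0: "\<Lambda> \<noteq> 0" using \<open>F \<noteq> 0\<close> by (simp add: \<Lambda>_def wlead_ne_0)
  have q: "degree q = d" "coeff q d = [:lead_coeff p, \<alpha>:]"
    using eval2_triangular_weight[OF \<alpha>, of p] by (simp_all add: q_def d_def)
  then have "q \<noteq> 0" using \<alpha> by auto
  have "eval2 G varY (varX * varY ^ d) = eval2 F varY q"
    by (simp add: G_def q_def pcompose_eq_eval2 eval2_eval2)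
  then have G_top: "coeff (eval2 G varY (varX * varY ^ d)) H = pcompose \<Lambda> [:lead_coeff p, \<alpha>:]"
    using coeff_wdeg_eval2_varY[OF \<open>q \<noteq> 0\<close>, of F] by (simp add: q H_def \<Lambda>_def flip: d_def)
  obtain k where k: "coeff (pcompose \<Lambda> [:lead_coeff p, \<alpha>:]) k \<noteq> 0" "k + m \<le> degree \<Lambda>"
    using pcompose_linear_coeff_ne_0[OF \<Lambda>0 _ \<alpha>, of "lead_coeff p"] \<open>p \<noteq> 0\<close>
    by (auto simp: m_def)
  have "d * k \<le> H" and "coeff (coeff G k) (H - d * k) \<noteq> 0"
    using k(1) by (auto simp: G_top[symmetric] coeff_coeff_eval2_weight split: if_splits)
  then have "H - d * k + k \<le> tdeg G" using coeff_le_tdeg by blast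
  moreover have "coeff \<Lambda> m \<noteq> 0" using coeff_order_0_ne_0[OF \<Lambda>0] by (simp add: m_def)
  then have "coeff (coeff F m) (H - d * m) \<noteq> 0"
    by (auto simp: \<Lambda>_def H_def d_def coeff_wlead split: if_splits)
  then have "H - d * m + m \<le> tdeg F" using coeff_le_tdeg by blast
  moreover have "coeff \<Lambda> (degree \<Lambda>) \<noteq> 0" using \<Lambda>0 by simp
  then have "d * degree \<Lambda> \<le> H" by (auto simp: \<Lambda>_def H_def d_def coeff_wlead split: if_splits)
  then have "d * k + d * m \<le> H"
    using k(2) by (metis add_mult_distrib2 le_trans mult_le_mono2)
  ultimately show ?thesis using that by (simp add: G_def)
qed

lemma tdeg_less_tdeg_pcompose_triangular:
  fixes F :: "'a::field poly poly"
  assumes p: "2 \<le> degree p" and "\<alpha> \<noteq> 0"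
    and top: "top_monomial F i a" and "i \<le> a" and "0 < a"
  shows "tdeg F < tdeg (pcompose F [:p, [:\<alpha>:]:])"
proof -
  define d where "d = degree p"
  define H where "H = wdeg d F"
  have "F \<noteq> 0" using top by (auto simp: top_monomial_def)
  have "p \<noteq> 0" using p by auto
  obtain m k where km: "d * k + d * m \<le> H" and F_bound: "H - d * m + m \<le> tdeg F"
    and G_bound: "H - d * k + k \<le> tdeg (pcompose F [:p, [:\<alpha>:]:])"
    using wdeg_monomials_pcompose_triangular[OF \<open>p \<noteq> 0\<close> \<open>\<alpha> \<noteq> 0\<close> \<open>F \<noteq> 0\<close>]
    unfolding d_def H_def by blast
  have "d * a + i \<le> H"
    using wdeg_ge[of F a d] top by (auto simp: top_monomial_iff_row H_def)
  have tdeg_F: "tdeg F = i + a" using top by (simp add: top_monomial_def)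
  have "2 * a \<le> d * a" and "2 * m \<le> d * m" using p by (simp_all add: d_def)
  have "(d - 1) * a \<le> (d - 1) * m"
    using \<open>d * a + i \<le> H\<close> km F_bound tdeg_F by (simp add: diff_mult_distrib)
  then have "a \<le> m" using p by (simp add: d_def)
  show ?thesis
  proof (cases "k = 0")
    case True
    then have "H \<le> tdeg (pcompose F [:p, [:\<alpha>:]:])" using G_bound by simp
    then show ?thesis
      using \<open>d * a + i \<le> H\<close> \<open>2 * a \<le> d * a\<close> \<open>0 < a\<close> tdeg_F by linarith
  next
    case False
    then show ?thesis
      using km G_bound \<open>2 * m \<le> d * m\<close> \<open>a \<le> m\<close> \<open>i \<le> a\<close> tdeg_F by linarith
  qed
qed

lemma eval2_eq_pcompose_swap:
  "eval2 u f [:q:] = pcompose (map_poly (\<lambda>c. pcompose c q) (eval2 u varY varX)) f"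
  by (simp add: eval2_poly_in_x_varY[symmetric] pcompose_eq_eval2 eval2_eval2 poly_map_const2_varX)

lemma aut_apply_swap_triangular:
  fixes p :: "'a::comm_ring_1 poly"
  shows "aut_apply (aut_comp (varY, varX)
      (const2 \<alpha> * varX + map_poly (\<lambda>a. [:a:]) p, const2 \<beta> * varY + const2 \<gamma>)) u =
    pcompose (map_poly (\<lambda>c. pcompose c [:\<gamma>, \<beta>:]) (eval2 u varY varX)) [:p, [:\<alpha>:]:]"
proof -
  have "aut_comp (varY, varX)
      (const2 \<alpha> * varX + map_poly (\<lambda>a. [:a:]) p, const2 \<beta> * varY + const2 \<gamma>) =
    ([:p, [:\<alpha>:]:], [:[:\<gamma>, \<beta>:]:])"
    by (simp add: aut_comp_def eval2_add eval2_mult eval2_poly_in_y poly_map_const2_varX)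
      (simp add: varX_def varY_def const2_def)
  then show ?thesis by (simp add: aut_apply_def eval2_eq_pcompose_swap)
qed

lemma pcompose_triangular_inverse:
  fixes F :: "'a::field poly poly"
  assumes "\<alpha> \<noteq> 0"
  shows "pcompose (pcompose F [:p, [:\<alpha>:]:]) [:- smult (inverse \<alpha>) p, [:inverse \<alpha>:]:] = F"
proof -
  have "pcompose [:p, [:\<alpha>:]:] [:- smult (inverse \<alpha>) p, [:inverse \<alpha>:]:] = [:0, 1:]"
    using assms by (simp add: pcompose_pCons)
  then show ?thesis by (simp flip: pcompose_assoc)
qed

lemma
  fixes u :: "'a::field poly poly"
  assumes "degree q = 1"
  shows tdeg_pcompose_swap: "tdeg (map_poly (\<lambda>c. pcompose c q) (eval2 u varY varX)) = tdeg u"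
    and top_monomial_pcompose_swap:
      "top_monomial (map_poly (\<lambda>c. pcompose c q) (eval2 u varY varX)) i j \<longleftrightarrow> top_monomial u j i"
  using assms
  by (simp_all add: tdeg_map_poly_rows top_monomial_map_poly_rows pcompose_eq_0_iff degree_pcompose
      tdeg_eval2_swap top_monomial_eval2_swap)

lemma biased_pcompose_triangular:
  fixes F :: "'a::field poly poly"
  assumes "2 \<le> degree p" and "\<alpha> \<noteq> 0" and "F \<noteq> 0"
    and le: "tdeg F \<le> tdeg (pcompose F [:p, [:\<alpha>:]:])"
  shows "biased (pcompose F [:p, [:\<alpha>:]:])"
proof (rule ccontr)
  define G where "G = pcompose F [:p, [:\<alpha>:]:]"
  assume "\<not> biased (pcompose F [:p, [:\<alpha>:]:])"
  then have "\<not> biased G" by (simp add: G_def)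
  have F_eq: "pcompose G [:- smult (inverse \<alpha>) p, [:inverse \<alpha>:]:] = F"
    using assms(2) by (simp add: G_def pcompose_triangular_inverse)
  then have "G \<noteq> 0" using \<open>F \<noteq> 0\<close> by auto
  then obtain i j where "top_monomial G i j" and "i < j"
    using not_biased_imp_top_monomial \<open>\<not> biased G\<close> by blast
  then have "tdeg G < tdeg F"
    using tdeg_less_tdeg_pcompose_triangular[of "- smult (inverse \<alpha>) p" "inverse \<alpha>" G i j]
      assms(1,2) by (simp add: F_eq)
  with le show False by (simp add: G_def)
qed

theorem corollary4p2:
  fixes u :: "'a::field poly poly" and \<alpha> \<beta> \<gamma> :: 'a and p :: "'a poly"
  assumes "\<forall>c. u \<noteq> const2 c"
    and "\<alpha> \<noteq> 0" and "\<beta> \<noteq> 0" and "degree p \<ge> 2"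
  defines "\<rho> \<equiv> (const2 \<alpha> * varX + map_poly (\<lambda>a. [:a:]) p, const2 \<beta> * varY + const2 \<gamma>)"
    and "\<tau> \<equiv> (varY, varX)"
  defines "v \<equiv> aut_apply (aut_comp \<tau> \<rho>) u"
  shows "(biased u \<longrightarrow> tdeg u < tdeg v)
       \<and> (tdeg u < tdeg v \<longrightarrow> tdeg u \<le> tdeg v)
       \<and> (tdeg u \<le> tdeg v \<longrightarrow> biased v)"
proof -
  define F where "F = map_poly (\<lambda>c. pcompose c [:\<gamma>, \<beta>:]) (eval2 u varY varX)"
  have v: "v = pcompose F [:p, [:\<alpha>:]:]"
    by (simp add: v_def \<tau>_def \<rho>_def F_def aut_apply_swap_triangular)
  have tdeg_F: "tdeg F = tdeg u" and top_F: "\<And>i j. top_monomial F i j \<longleftrightarrow> top_monomial u j i"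
    using assms(3) by (simp_all add: F_def tdeg_pcompose_swap top_monomial_pcompose_swap)
  have "u \<noteq> 0" using assms(1) const2_0 by metis
  have "F \<noteq> 0"
  proof -
    obtain i j where "top_monomial u i j" using top_monomial_exists[OF \<open>u \<noteq> 0\<close>] by blast
    then have "top_monomial F j i" by (simp add: top_F)
    then show ?thesis by (auto simp: top_monomial_def)
  qed
  have "tdeg u < tdeg v" if biased: "biased u"
  proof -
    obtain i j where "top_monomial u i j" and "j \<le> i"
      using biased_imp_top_monomial[OF \<open>u \<noteq> 0\<close> biased] by blast
    moreover have "0 < tdeg u" using assms(1) tdeg_eq_0_imp_const2 by blast
    ultimately have "0 < i" by (auto simp: top_monomial_def)
    have "top_monomial F j i" using \<open>top_monomial u i j\<close> by (simp add: top_F)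
    from tdeg_less_tdeg_pcompose_triangular[OF assms(4,2) this \<open>j \<le> i\<close> \<open>0 < i\<close>]
    show ?thesis by (simp add: v tdeg_F)
  qed
  moreover have "biased v" if "tdeg u \<le> tdeg v"
    using biased_pcompose_triangular[OF assms(4,2) \<open>F \<noteq> 0\<close>] that by (simp add: v tdeg_F)
  ultimately show ?thesis by auto
qed

end
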